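(* Let $N\ge 4$ be a multiple of $4$ and $0\le r_1<\dots<r_N\le 1$. Let $h_1^*$ be the 2-factor of $\mathcal K_N$ consisting of the $N/4$ four-cycles $(r_a,r_{a+N/2},r_{a+1},r_{a+N/2+1})$ for $a=1,3,5,\dots,\frac N2-1$, and let $h_2^*$ be the 2-factor consisting of the $N/4$ four-cycles $(r_a,r_{a+N/2},r_{a-1},r_{a+N/2-1})$ for $a=1,3,\dots,\frac N2-1$, where indices are taken mod $N$ in $\{1,\dots,N\}$ (so for $a=1$ the cycle is $(r_1,r_{N/2+1},r_N,r_{N/2})$). Then $h_1^*$ and $h_2^*$ are exactly the 2-factors of $\mathcal K_N$ having the maximum number of crossing pairs of edges.
   Context: A 2-factor of $\mathcal K_N$ is a spanning subgraph in which each vertex has degree $2$, i.e. a covering of all vertices by vertex-disjoint cycles of length at least $3$; a cycle written $(v_1,\dots,v_m)$ has edges $\{v_i,v_{i+1}\}$ and $\{v_m,v_1\}$. Two edges $\{r_i,r_j\}$, $\{r_k,r_\ell\}$ with $i<j$, $k<\ell$ cross if $i<k<j<\ell$ or $k<i<\ell<j$; the number of crossings of a 2-factor is the number of unordered pairs of its edges that cross. *)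

theory Defs
  imports Complex_Main
begin

text \<open>Vertex r_i of K_N is represented by its index i in {1..N}; an edge is a
 2-element set of indices. Since r_1 < ... < r_N, crossings (defined via indices)
 depend only on the indices.\<close>

definition two_factor :: "nat \<Rightarrow> nat set set \<Rightarrow> bool" where
  "two_factor N F \<longleftrightarrow>
     (\<forall>e\<in>F. e \<subseteq> {1..N} \<and> card e = 2) \<and>
     (\<forall>v\<in>{1..N}. card {e\<in>F. v \<in> e} = 2)"

definition cross :: "nat set \<Rightarrow> nat set \<Rightarrow> bool" where
  "cross e f \<longleftrightarrow>
     (let i = Min e; j = Max e; k = Min f; l = Max f in
        (i < k \<and> k < j \<and> j < l) \<or> (k < i \<and> i < l \<and> l < j))"

definition crossings :: "nat set set \<Rightarrow> nat" where
  "crossings F = card {{e, f} | e f. e \<in> F \<and> f \<in> F \<and> cross e f}"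

definition cycle_edges :: "nat list \<Rightarrow> nat set set" where
  "cycle_edges vs = {{vs ! i, vs ! ((i + 1) mod length vs)} | i. i < length vs}"

definition wrap :: "nat \<Rightarrow> int \<Rightarrow> nat" where
  "wrap N k = nat ((k - 1) mod int N) + 1"

definition h1 :: "nat \<Rightarrow> nat set set" where
  "h1 N = (\<Union>a\<in>{a. odd a \<and> 1 \<le> a \<and> a \<le> N div 2 - 1}.
     cycle_edges [wrap N (int a), wrap N (int a + int (N div 2)),
                  wrap N (int a + 1), wrap N (int a + int (N div 2) + 1)])"

definition h2 :: "nat \<Rightarrow> nat set set" where
  "h2 N = (\<Union>a\<in>{a. odd a \<and> 1 \<le> a \<and> a \<le> N div 2 - 1}.
     cycle_edges [wrap N (int a), wrap N (int a + int (N div 2)),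
                  wrap N (int a - 1), wrap N (int a + int (N div 2) - 1)])"

end

(*
  For an edge e of a 2-factor F of K_N, every edge of F other than e and its two neighbours
  either crosses e or is disjoint from e without crossing it. Summing over e gives
  2 cr(F) + P(F) + 3N = N^2, where P(F) counts the ordered disjoint non-crossing pairs of
  edges, so cr(F) is maximal exactly when P(F) is minimal.

  Write N = 2n. An edge without a disjoint non-crossing partner is a diameter {k, k + n}, and
  there are only n diameters, so P(F) >= n. If P(F) = n, then F contains every diameter and no
  diameter has a partner; this forces every other edge to join a vertex to a neighbour of its
  antipode, and a parity argument (n is even) leaves exactly h1 and h2. Conversely, among
  such edges the only possible partner of a non-diameter is its antipodal image, so h1 and h2
  attain P = n.
*)
theory Submission
  imports Defs
begin

section \<open>Crossings of a 2-factor\<close>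

lemma cross_commute: "cross e f \<longleftrightarrow> cross f e"
  unfolding cross_def Let_def by auto

lemma not_cross_self: "\<not> cross e e"
  unfolding cross_def Let_def by auto

lemma cross_doubleton:
  fixes x y z w :: nat
  assumes "x < y" "z < w"
  shows "cross {x, y} {z, w} \<longleftrightarrow> (x < z \<and> z < y \<and> y < w) \<or> (z < x \<and> x < w \<and> w < y)"
  using assms unfolding cross_def Let_def by (simp add: min_def max_def)

lemma noncrossing_disjoint_sides:
  fixes i j x y :: nat
  assumes "i < j" "x < y" "{x, y} \<inter> {i, j} = {}" "\<not> cross {i, j} {x, y}"
  shows "(i < x \<and> y < j) \<or> y < i \<or> j < x \<or> (x < i \<and> j < y)"
  using assms by (auto simp: cross_doubleton)

lemma card_2_ordered_E:
  fixes e :: "nat set"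
  assumes "card e = 2"
  obtains x y where "x < y" "e = {x, y}"
proof -
  from assms obtain x y where "e = {x, y}" "x \<noteq> y" by (auto simp: card_2_iff)
  then show ?thesis using that by (metis insert_commute linorder_neqE_nat)
qed

lemma cross_imp_disjoint:
  assumes "card e = 2" "card f = 2" "cross e f"
  shows "e \<inter> f = {}"
proof -
  obtain x y where xy: "x < y" "e = {x, y}" using card_2_ordered_E[OF assms(1)] .
  obtain z w where zw: "z < w" "f = {z, w}" using card_2_ordered_E[OF assms(2)] .
  show ?thesis using assms(3) xy zw cross_doubleton[OF xy(1) zw(1)] by auto
qed

lemma two_factor_edge: "two_factor N F \<Longrightarrow> e \<in> F \<Longrightarrow> card e = 2 \<and> e \<subseteq> {1..N}"
  unfolding two_factor_def by auto

lemma two_factor_finite: "two_factor N F \<Longrightarrow> finite F"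
  unfolding two_factor_def by (rule finite_subset[of _ "Pow {1..N}"]) auto

lemma two_factor_edges_at: "two_factor N F \<Longrightarrow> v \<in> {1..N} \<Longrightarrow> card {e \<in> F. v \<in> e} = 2"
  unfolding two_factor_def by auto

lemma two_factor_sum_card_Int:
  assumes tf: "two_factor N F" and U: "U \<subseteq> {1..N}"
  shows "(\<Sum>f\<in>F. card (f \<inter> U)) = 2 * card U"
proof -
  have fin: "finite F" using two_factor_finite[OF tf] .
  have "finite U" using U finite_subset by blast
  then have "(\<Sum>f\<in>F. card (f \<inter> U)) = (\<Sum>f\<in>F. \<Sum>v\<in>U. if v \<in> f then 1 else 0)"
    by (simp add: sum.If_cases Int_commute)
  also have "\<dots> = (\<Sum>v\<in>U. \<Sum>f\<in>F. if v \<in> f then 1 else 0)" by (rule sum.swap)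
  also have "\<dots> = (\<Sum>v\<in>U. card {f \<in> F. v \<in> f})"
    using fin by (simp add: sum.If_cases Int_def)
  also have "\<dots> = (\<Sum>v\<in>U. 2)"
    using two_factor_edges_at[OF tf] U by (intro sum.cong) auto
  finally show ?thesis by simp
qed

lemma two_factor_card: "two_factor N F \<Longrightarrow> card F = N"
  using two_factor_sum_card_Int[of N F "{1..N}"]
  by (simp add: two_factor_def Int_absorb2 cong: sum.cong)

lemma two_factor_other_edge:
  assumes tf: "two_factor N F" and "f \<in> F" "w \<in> f"
  obtains g where "g \<noteq> f" "{e \<in> F. w \<in> e} = {f, g}"
proof -
  have "w \<in> {1..N}" using two_factor_edge[OF tf \<open>f \<in> F\<close>] \<open>w \<in> f\<close> by blast
  then have "card {e \<in> F. w \<in> e} = 2" by (rule two_factor_edges_at[OF tf])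
  then obtain x y where xy: "x \<noteq> y" "{e \<in> F. w \<in> e} = {x, y}" unfolding card_2_iff by blast
  moreover have "f \<in> {x, y}" using \<open>f \<in> F\<close> \<open>w \<in> f\<close> unfolding xy(2)[symmetric] by blast
  ultimately show ?thesis using that[of y] that[of x] by (auto simp: insert_commute)
qed

definition noncrossing_disjoint :: "nat set set \<Rightarrow> nat set \<Rightarrow> nat set set" where
  "noncrossing_disjoint F e = {f \<in> F. f \<inter> e = {} \<and> \<not> cross e f}"

lemma finite_noncrossing_disjoint: "finite F \<Longrightarrow> finite (noncrossing_disjoint F e)"
  unfolding noncrossing_disjoint_def by simp

lemma two_factor_card_edges_meeting:
  assumes tf: "two_factor N F" and eF: "e \<in> F"
  shows "card {f \<in> F. f \<inter> e \<noteq> {}} = 3"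
proof -
  obtain i j where ij: "i < j" "e = {i, j}"
    using card_2_ordered_E two_factor_edge[OF tf eF] by blast
  have ijN: "i \<in> {1..N}" "j \<in> {1..N}" using two_factor_edge[OF tf eF] ij by auto
  define Ei where "Ei = {f \<in> F. i \<in> f}"
  define Ej where "Ej = {f \<in> F. j \<in> f}"
  have "Ei \<inter> Ej = {e}"
  proof
    show "Ei \<inter> Ej \<subseteq> {e}"
    proof
      fix f assume f: "f \<in> Ei \<inter> Ej"
      then have "card f = 2" "finite f" "{i, j} \<subseteq> f"
        using two_factor_edge[OF tf] card.infinite unfolding Ei_def Ej_def by force+
      then have "{i, j} = f" using ij by (intro card_subset_eq) auto
      then show "f \<in> {e}" using ij by simp
    qed
  qed (use eF ij in \<open>auto simp: Ei_def Ej_def\<close>)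
  moreover have "finite Ei" "finite Ej"
    using two_factor_finite[OF tf] unfolding Ei_def Ej_def by auto
  moreover have "card Ei = 2" "card Ej = 2"
    using two_factor_edges_at[OF tf] ijN unfolding Ei_def Ej_def by auto
  ultimately have "card (Ei \<union> Ej) = 3" using card_Un_Int[of Ei Ej] by simp
  moreover have "Ei \<union> Ej = {f \<in> F. f \<inter> e \<noteq> {}}" unfolding Ei_def Ej_def ij by auto
  ultimately show ?thesis by simp
qed

lemma card_crossing_plus_noncrossing_disjoint:
  assumes tf: "two_factor N F" and eF: "e \<in> F"
  shows "card {f \<in> F. cross e f} + card (noncrossing_disjoint F e) + 3 = N"
proof -
  have fin: "finite F" using two_factor_finite[OF tf] .
  have crossing_disjoint: "f \<inter> e = {}" if "f \<in> F" "cross e f" for f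
    using cross_imp_disjoint[of e f] that two_factor_edge[OF tf] eF by blast
  have "F = {f \<in> F. f \<inter> e \<noteq> {}} \<union> ({f \<in> F. cross e f} \<union> noncrossing_disjoint F e)"
    unfolding noncrossing_disjoint_def by blast
  also have "card \<dots> = 3 + card ({f \<in> F. cross e f} \<union> noncrossing_disjoint F e)"
    using fin two_factor_card_edges_meeting[OF tf eF] crossing_disjoint
    by (subst card_Un_disjoint) (auto simp: noncrossing_disjoint_def)
  also have "card ({f \<in> F. cross e f} \<union> noncrossing_disjoint F e)
      = card {f \<in> F. cross e f} + card (noncrossing_disjoint F e)"
    using fin by (intro card_Un_disjoint) (auto simp: noncrossing_disjoint_def)
  finally show ?thesis using two_factor_card[OF tf] by simp
qed

lemma sum_card_crossing:
  assumes fin: "finite F"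
  shows "(\<Sum>e\<in>F. card {f \<in> F. cross e f}) = 2 * crossings F"
proof -
  define P where "P = {{e, f} | e f. e \<in> F \<and> f \<in> F \<and> cross e f}"
  define ordered where "ordered p = {(e, f). e \<in> F \<and> f \<in> F \<and> cross e f \<and> {e, f} = p}" for p
  have "finite P" unfolding P_def by (rule finite_subset[of _ "Pow F"]) (auto simp: fin)
  have card_ordered: "card (ordered p) = 2" if "p \<in> P" for p
  proof -
    from that obtain e f where p: "p = {e, f}" "e \<in> F" "f \<in> F" "cross e f"
      unfolding P_def by blast
    then have "e \<noteq> f" using not_cross_self by blast
    moreover have "ordered p = {(e, f), (f, e)}"
      unfolding ordered_def using p \<open>e \<noteq> f\<close> cross_commute[of e f] by (auto simp: doubleton_eq_iff)
    ultimately show ?thesis by simp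
  qed
  have "(\<Sum>e\<in>F. card {f \<in> F. cross e f}) = card (SIGMA e:F. {f \<in> F. cross e f})"
    using fin by simp
  also have "(SIGMA e:F. {f \<in> F. cross e f}) = (\<Union>p\<in>P. ordered p)"
    unfolding P_def ordered_def by blast
  also have "card \<dots> = (\<Sum>p\<in>P. card (ordered p))"
    using \<open>finite P\<close> fin
    by (intro card_UN_disjoint) (auto simp: ordered_def intro: finite_subset[of _ "F \<times> F"])
  also have "\<dots> = 2 * card P" using card_ordered by simp
  finally show ?thesis unfolding crossings_def P_def .
qed

lemma crossings_identity:
  assumes tf: "two_factor N F"
  shows "2 * crossings F + (\<Sum>e\<in>F. card (noncrossing_disjoint F e)) + 3 * N = N * N"
proof -
  have "(\<Sum>e\<in>F. card {f \<in> F. cross e f} + card (noncrossing_disjoint F e) + 3) = (\<Sum>e\<in>F. N)"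
    using card_crossing_plus_noncrossing_disjoint[OF tf] by simp
  then show ?thesis
    using sum_card_crossing[OF two_factor_finite[OF tf]] two_factor_card[OF tf]
    by (simp add: sum.distrib)
qed

lemma two_factor_independent_card:
  assumes tf: "two_factor N F" and U: "U \<subseteq> {1..N}" and indep: "\<forall>f\<in>F. \<not> f \<subseteq> U"
    and e: "e \<in> F" "e \<inter> U = {}"
  shows "2 * card U \<le> N - 1"
proof -
  have fin: "finite F" using two_factor_finite[OF tf] .
  have "card (f \<inter> U) \<le> 1" if "f \<in> F" for f
  proof (rule ccontr)
    assume "\<not> ?thesis"
    moreover have "card f = 2" "finite f" using two_factor_edge[OF tf that] card.infinite by force+
    ultimately have "f \<inter> U = f"
      using card_mono[of f "f \<inter> U"] by (intro card_subset_eq) auto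
    then show False using indep that by blast
  qed
  then have "(\<Sum>f\<in>F - {e}. card (f \<inter> U)) \<le> card (F - {e})"
    using sum_mono[of "F - {e}" "\<lambda>f. card (f \<inter> U)" "\<lambda>_. 1"] by simp
  moreover have "2 * card U = card (e \<inter> U) + (\<Sum>f\<in>F - {e}. card (f \<inter> U))"
    using two_factor_sum_card_Int[OF tf U] fin e(1) by (simp add: sum.remove)
  ultimately show ?thesis using e fin two_factor_card[OF tf] by simp
qed

lemma two_factor_union_involutions:
  assumes d: "\<And>v. v \<in> {1..N} \<Longrightarrow> d v \<in> {1..N} \<and> d (d v) = v \<and> d v \<noteq> v"
    and q: "\<And>v. v \<in> {1..N} \<Longrightarrow> q v \<in> {1..N} \<and> q (q v) = v \<and> q v \<noteq> v"
    and dq: "\<And>v. v \<in> {1..N} \<Longrightarrow> d v \<noteq> q v"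
  shows "two_factor N ({{v, d v} | v. v \<in> {1..N}} \<union> {{v, q v} | v. v \<in> {1..N}})"
    (is "two_factor N ?G")
proof -
  have edge_E: thesis if "e \<in> ?G"
    "\<And>v. v \<in> {1..N} \<Longrightarrow> e = {v, d v} \<Longrightarrow> thesis"
    "\<And>v. v \<in> {1..N} \<Longrightarrow> e = {v, q v} \<Longrightarrow> thesis" for e thesis
    using that by blast
  have edges_at: "{e \<in> ?G. w \<in> e} = {{w, d w}, {w, q w}}" if w: "w \<in> {1..N}" for w
  proof
    show "{e \<in> ?G. w \<in> e} \<subseteq> {{w, d w}, {w, q w}}"
    proof
      fix e assume "e \<in> {e \<in> ?G. w \<in> e}"
      then have "e \<in> ?G" "w \<in> e" by auto
      from \<open>e \<in> ?G\<close> show "e \<in> {{w, d w}, {w, q w}}"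
      proof (rule edge_E)
        fix v assume v: "v \<in> {1..N}" "e = {v, d v}"
        then have "w = v \<or> d w = v" using \<open>w \<in> e\<close> d[OF v(1)] by auto
        then show ?thesis using v d[OF w] by auto
      next
        fix v assume v: "v \<in> {1..N}" "e = {v, q v}"
        then have "w = v \<or> q w = v" using \<open>w \<in> e\<close> q[OF v(1)] by auto
        then show ?thesis using v q[OF w] by auto
      qed
    qed
    show "{{w, d w}, {w, q w}} \<subseteq> {e \<in> ?G. w \<in> e}" using w by blast
  qed
  have "card {{w, d w}, {w, q w}} = 2" if "w \<in> {1..N}" for w
    using dq[OF that] by (simp add: doubleton_eq_iff)
  moreover have "e \<subseteq> {1..N} \<and> card e = 2" if "e \<in> ?G" for e
    using that
  proof (rule edge_E)
    fix v assume "v \<in> {1..N}" "e = {v, d v}"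
    then show ?thesis using d[of v] by auto
  next
    fix v assume "v \<in> {1..N}" "e = {v, q v}"
    then show ?thesis using q[of v] by auto
  qed
  ultimately show ?thesis unfolding two_factor_def using edges_at by simp
qed

section \<open>Diameters and near-diameters\<close>

locale antipodal =
  fixes N n :: nat
  assumes N_eq: "N = 2 * n" and n_ge_2: "2 \<le> n"
begin

definition antipode :: "nat \<Rightarrow> nat" where
  "antipode v = (if v \<le> n then v + n else v - n)"

definition diameters :: "nat set set" where
  "diameters = (\<lambda>k. {k, k + n}) ` {1..n}"

lemma diameter_E:
  assumes "d \<in> diameters"
  obtains k where "d = {k, k + n}" "1 \<le> k" "k \<le> n"
  using assms unfolding diameters_def by auto

lemma card_diameters: "card diameters = n"
  unfolding diameters_def by (subst card_image) (auto simp: inj_on_def doubleton_eq_iff)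

lemma finite_diameters: "finite diameters"
  unfolding diameters_def by simp

lemma doubleton_in_diameters: "i < j \<Longrightarrow> {i, j} \<in> diameters \<longleftrightarrow> 1 \<le> i \<and> j = i + n \<and> j \<le> N"
  unfolding diameters_def N_eq by (auto simp: doubleton_eq_iff)

lemma antipode_in_diameters: "v \<in> {1..N} \<Longrightarrow> {v, antipode v} \<in> diameters"
  unfolding diameters_def antipode_def N_eq
  by (cases "v \<le> n") (auto simp: image_iff doubleton_eq_iff intro: exI[of _ "v - n"])

lemma diameter_through: "d \<in> diameters \<Longrightarrow> v \<in> d \<Longrightarrow> d = {v, antipode v}"
  unfolding diameters_def antipode_def by auto

lemma diameters_eq: "diameters = {{v, antipode v} | v. v \<in> {1..N}}"
proof
  show "diameters \<subseteq> {{v, antipode v} | v. v \<in> {1..N}}"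
  proof
    fix d assume "d \<in> diameters"
    then obtain k where "d = {k, k + n}" "1 \<le> k" "k \<le> n" by (rule diameter_E)
    then show "d \<in> {{v, antipode v} | v. v \<in> {1..N}}"
      unfolding antipode_def N_eq by (intro CollectI exI[of _ k]) auto
  qed
qed (auto intro: antipode_in_diameters)

text \<open>One of the two sides of a non-diameter has more than (N - 1) / 2 vertices and therefore
  contains an edge.\<close>
lemma noncrossing_disjoint_empty_imp_diameter:
  assumes tf: "two_factor N F" and eF: "e \<in> F" and empty: "noncrossing_disjoint F e = {}"
  shows "e \<in> diameters"
proof -
  obtain i j where ij: "i < j" "e = {i, j}"
    using card_2_ordered_E two_factor_edge[OF tf eF] by blast
  have ijN: "1 \<le> i" "j \<le> N" using two_factor_edge[OF tf eF] ij by auto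
  have side_bound: "2 * card U \<le> N - 1"
    if "U \<subseteq> {1..N}" "U \<inter> e = {}"
      and side: "\<And>x y. x < y \<Longrightarrow> x \<in> U \<Longrightarrow> y \<in> U \<Longrightarrow> \<not> cross {i, j} {x, y}" for U
  proof (rule two_factor_independent_card[OF tf \<open>U \<subseteq> {1..N}\<close> _ eF])
    show "\<forall>f\<in>F. \<not> f \<subseteq> U"
    proof (intro ballI notI)
      fix f assume f: "f \<in> F" "f \<subseteq> U"
      obtain x y where "x < y" "f = {x, y}"
        using card_2_ordered_E two_factor_edge[OF tf f(1)] by blast
      then have "f \<in> noncrossing_disjoint F e"
        using f side that(2) ij unfolding noncrossing_disjoint_def by auto
      then show False using empty by simp
    qed
  qed (use that in auto)
  have "2 * card {i<..<j} \<le> N - 1"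
    using ijN ij by (intro side_bound) (auto simp: cross_doubleton)
  moreover have "2 * card ({1..N} - {i..j}) \<le> N - 1"
    using ij by (intro side_bound) (auto simp: cross_doubleton)
  moreover have "card ({1..N} - {i..j}) = N - (j + 1 - i)"
    using ijN ij by (subst card_Diff_subset) auto
  ultimately have "j = i + n" using ij ijN N_eq by simp
  then show ?thesis using ij ijN doubleton_in_diameters by simp
qed

lemma card_non_diameters_le_noncrossing_sum:
  assumes tf: "two_factor N F"
  shows "card (F - diameters) + (\<Sum>e\<in>F \<inter> diameters. card (noncrossing_disjoint F e))
    \<le> (\<Sum>e\<in>F. card (noncrossing_disjoint F e))"
proof -
  have fin: "finite F" using two_factor_finite[OF tf] .
  have "card (F - diameters) = (\<Sum>e\<in>F - diameters. 1)" by simp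
  also have "\<dots> \<le> (\<Sum>e\<in>F - diameters. card (noncrossing_disjoint F e))"
  proof (rule sum_mono)
    fix e assume "e \<in> F - diameters"
    then have "noncrossing_disjoint F e \<noteq> {}"
      using noncrossing_disjoint_empty_imp_diameter[OF tf] by blast
    then show "1 \<le> card (noncrossing_disjoint F e)"
      using finite_noncrossing_disjoint[OF fin] by (simp add: Suc_le_eq card_gt_0_iff)
  qed
  finally show ?thesis using fin by (simp add: sum.Int_Diff[of F _ diameters])
qed

lemma card_non_diameters_ge:
  assumes tf: "two_factor N F"
  shows "n \<le> card (F - diameters)"
proof -
  have "card F - card diameters \<le> card (F - diameters)"
    using finite_diameters by (rule diff_card_le_card_Diff)
  then show ?thesis using two_factor_card[OF tf] card_diameters N_eq by simp
qed

lemma noncrossing_sum_ge: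
  "two_factor N F \<Longrightarrow> n \<le> (\<Sum>e\<in>F. card (noncrossing_disjoint F e))"
  using card_non_diameters_le_noncrossing_sum card_non_diameters_ge by fastforce

lemma noncrossing_sum_eq_imp_diameters:
  assumes tf: "two_factor N F" and eq: "(\<Sum>e\<in>F. card (noncrossing_disjoint F e)) = n"
  shows "diameters \<subseteq> F" "\<forall>d\<in>diameters. noncrossing_disjoint F d = {}"
proof -
  have fin: "finite F" using two_factor_finite[OF tf] .
  have "card (F - diameters) = n" "(\<Sum>e\<in>F \<inter> diameters. card (noncrossing_disjoint F e)) = 0"
    using card_non_diameters_le_noncrossing_sum[OF tf] card_non_diameters_ge[OF tf] eq by auto
  moreover have "card (F - diameters) = card F - card (F \<inter> diameters)"
    using fin by (simp add: card_Diff_subset_Int)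
  ultimately have "card (F \<inter> diameters) = card diameters"
    using two_factor_card[OF tf] card_diameters N_eq card_mono[OF fin, of "F \<inter> diameters"] by simp
  then show dF: "diameters \<subseteq> F"
    using finite_diameters card_subset_eq[of diameters "F \<inter> diameters"] by blast
  show "\<forall>d\<in>diameters. noncrossing_disjoint F d = {}"
    using \<open>(\<Sum>e\<in>F \<inter> diameters. _) = 0\<close> dF finite_diameters
      finite_noncrossing_disjoint[OF fin]
    by (simp add: Int_absorb1)
qed

text \<open>Reading indices cyclically modulo N, opp_pred v and opp_succ v are the two neighbours of
  antipode v, and the near-diameters are the chords of cyclic length n - 1.\<close>
definition opp_pred :: "nat \<Rightarrow> nat" where
  "opp_pred v = (if v \<le> n + 1 then v + n - 1 else v - n - 1)"

definition opp_succ :: "nat \<Rightarrow> nat" where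
  "opp_succ v = (if v < n then v + n + 1 else v - n + 1)"

definition near_diameters :: "nat set set" where
  "near_diameters = {{v, opp_pred v} | v. v \<in> {1..N}}"

lemma antipode_range: "v \<in> {1..N} \<Longrightarrow> antipode v \<in> {1..N}"
  unfolding antipode_def N_eq by auto

lemma opp_pred_range: "v \<in> {1..N} \<Longrightarrow> opp_pred v \<in> {1..N}"
  unfolding opp_pred_def N_eq using n_ge_2 by auto

lemma opp_succ_range: "v \<in> {1..N} \<Longrightarrow> opp_succ v \<in> {1..N}"
  unfolding opp_succ_def N_eq using n_ge_2 by auto

lemma opp_pred_opp_succ: "v \<in> {1..N} \<Longrightarrow> opp_pred (opp_succ v) = v"
  unfolding opp_pred_def opp_succ_def N_eq using n_ge_2 by auto

lemma opp_succ_opp_pred: "v \<in> {1..N} \<Longrightarrow> opp_succ (opp_pred v) = v"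
  unfolding opp_pred_def opp_succ_def N_eq using n_ge_2 by auto

lemma antipode_antipode: "v \<in> {1..N} \<Longrightarrow> antipode (antipode v) = v"
  unfolding antipode_def N_eq by auto

lemma antipode_neq: "v \<in> {1..N} \<Longrightarrow> antipode v \<noteq> v"
  unfolding antipode_def N_eq using n_ge_2 by auto

lemma opp_pred_neq: "v \<in> {1..N} \<Longrightarrow> opp_pred v \<noteq> v"
  unfolding opp_pred_def N_eq using n_ge_2 by auto

lemma opp_succ_neq: "v \<in> {1..N} \<Longrightarrow> opp_succ v \<noteq> v"
  unfolding opp_succ_def N_eq using n_ge_2 by auto

lemma antipode_neq_opp_pred: "v \<in> {1..N} \<Longrightarrow> antipode v \<noteq> opp_pred v"
  unfolding antipode_def opp_pred_def N_eq using n_ge_2 by auto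

lemma antipode_neq_opp_succ: "v \<in> {1..N} \<Longrightarrow> antipode v \<noteq> opp_succ v"
  unfolding antipode_def opp_succ_def N_eq using n_ge_2 by auto

lemma opp_pred_neq_opp_succ: "v \<in> {1..N} \<Longrightarrow> opp_pred v \<noteq> opp_succ v"
  unfolding opp_pred_def opp_succ_def N_eq using n_ge_2 by auto

lemma opp_succ_opp_succ: "1 \<le> v \<Longrightarrow> v + 2 \<le> N \<Longrightarrow> opp_succ (opp_succ v) = v + 2"
  unfolding opp_succ_def N_eq by auto

lemma near_diameter_E:
  assumes "e \<in> near_diameters"
  obtains i j where "e = {i, j}" "1 \<le> i" "i < j" "j \<le> N" "j + 1 = i + n \<or> j = i + n + 1"
proof -
  obtain v where v: "v \<in> {1..N}" "e = {v, opp_pred v}"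
    using assms unfolding near_diameters_def by blast
  show ?thesis
  proof (cases "v \<le> n + 1")
    case True
    then show ?thesis using that[of v "v + n - 1"] v n_ge_2 N_eq by (auto simp: opp_pred_def)
  next
    case False
    then show ?thesis
      using that[of "v - n - 1" v] v n_ge_2 N_eq by (auto simp: opp_pred_def insert_commute)
  qed
qed

lemma diameter_crosses:
  assumes d: "d \<in> diameters" and f: "f \<in> diameters \<union> near_diameters" and "d \<inter> f = {}"
  shows "cross d f"
proof -
  obtain k where k: "d = {k, k + n}" "1 \<le> k" "k \<le> n" using diameter_E[OF d] .
  have "k < k + n" using n_ge_2 by simp
  from f show ?thesis
  proof
    assume "f \<in> diameters"
    then obtain l where "f = {l, l + n}" "1 \<le> l" "l \<le> n" by (rule diameter_E)
    then show ?thesis using k \<open>d \<inter> f = {}\<close> n_ge_2 by (auto simp: cross_doubleton)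
  next
    assume "f \<in> near_diameters"
    then obtain i j where "f = {i, j}" "1 \<le> i" "i < j" "j \<le> N" "j + 1 = i + n \<or> j = i + n + 1"
      by (rule near_diameter_E)
    then show ?thesis using k \<open>d \<inter> f = {}\<close> n_ge_2 N_eq by (auto simp: cross_doubleton)
  qed
qed

lemma near_diameter_noncrossing:
  assumes e: "e \<in> near_diameters" and f: "f \<in> diameters \<union> near_diameters"
    and disj: "f \<inter> e = {}" and nc: "\<not> cross e f"
  shows "f = antipode ` e"
proof -
  obtain i j where ij: "e = {i, j}" "1 \<le> i" "i < j" "j \<le> N" "j + 1 = i + n \<or> j = i + n + 1"
    using near_diameter_E[OF e] .
  obtain x y where xy: "f = {x, y}" "1 \<le> x" "x < y" "y \<le> N" "x + n \<le> y + 1" "y \<le> x + n + 1"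
  proof -
    from f show thesis
    proof
      assume "f \<in> diameters"
      then obtain k where "f = {k, k + n}" "1 \<le> k" "k \<le> n" by (rule diameter_E)
      then show thesis using that[of k "k + n"] N_eq n_ge_2 by auto
    next
      assume "f \<in> near_diameters"
      then obtain x y where "f = {x, y}" "1 \<le> x" "x < y" "y \<le> N" "y + 1 = x + n \<or> y = x + n + 1"
        by (rule near_diameter_E)
      then show thesis using that[of x y] by auto
    qed
  qed
  have side: "(i < x \<and> y < j) \<or> y < i \<or> j < x \<or> (x < i \<and> j < y)"
    using noncrossing_disjoint_sides[OF \<open>i < j\<close> \<open>x < y\<close>] disj nc ij xy by (simp add: Int_commute)
  consider "j = i + n + 1" | "i = 1" "j + 1 = i + n" | "i = n + 1" "j + 1 = i + n"
    | "1 < i" "i \<le> n" "j + 1 = i + n"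
    using ij N_eq by linarith
  then have "{x, y} = {antipode i, antipode j}"
  proof cases
    case 1
    then have "x = i + 1" "y + 1 = j" using side ij xy N_eq n_ge_2 by linarith+
    moreover have "i \<le> n" using 1 ij N_eq by linarith
    ultimately show ?thesis using 1 unfolding antipode_def by auto
  next
    case 2
    then have "x = n + 1" "y = 2 * n" using side ij xy N_eq n_ge_2 by linarith+
    then show ?thesis using 2 n_ge_2 unfolding antipode_def by auto
  next
    case 3
    then have "x = 1" "y = n" using side ij xy N_eq n_ge_2 by linarith+
    then show ?thesis using 3 n_ge_2 unfolding antipode_def by auto
  next
    case 4
    then have "x + 1 = i" "y = j + 1" using side ij xy N_eq n_ge_2 by linarith+
    then show ?thesis using 4 unfolding antipode_def by auto
  qed
  then show ?thesis using ij xy by simp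
qed

lemma noncrossing_sum_le:
  assumes tf: "two_factor N F" and dF: "diameters \<subseteq> F"
    and near: "F \<subseteq> diameters \<union> near_diameters"
  shows "(\<Sum>e\<in>F. card (noncrossing_disjoint F e)) \<le> n"
proof -
  have fin: "finite F" using two_factor_finite[OF tf] .
  have "noncrossing_disjoint F d = {}" if "d \<in> diameters" for d
    using diameter_crosses[OF that] near unfolding noncrossing_disjoint_def by blast
  then have "(\<Sum>e\<in>F. card (noncrossing_disjoint F e))
      = (\<Sum>e\<in>F - diameters. card (noncrossing_disjoint F e))"
    using fin by (intro sum.mono_neutral_right) auto
  also have "\<dots> \<le> (\<Sum>e\<in>F - diameters. 1)"
  proof (rule sum_mono)
    fix e assume "e \<in> F - diameters"
    then have "e \<in> near_diameters" using near by blast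
    then have "noncrossing_disjoint F e \<subseteq> {antipode ` e}"
      using near near_diameter_noncrossing[of e] unfolding noncrossing_disjoint_def by blast
    then show "card (noncrossing_disjoint F e) \<le> 1"
      using card_mono[of "{antipode ` e}"] by fastforce
  qed
  also have "\<dots> = card F - card diameters"
    using dF finite_diameters by (simp add: card_Diff_subset)
  finally show ?thesis using two_factor_card[OF tf] card_diameters N_eq by simp
qed

lemma doubleton_in_near_diameters:
  assumes "1 \<le> i" "i < j" "j \<le> N" "j + 1 = i + n \<or> j = i + n + 1"
  shows "{i, j} \<in> near_diameters"
  using assms(4)
proof
  assume "j + 1 = i + n"
  then have "{i, j} = {i, opp_pred i}" "i \<in> {1..N}" using assms N_eq unfolding opp_pred_def by auto
  then show ?thesis unfolding near_diameters_def by blast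
next
  assume "j = i + n + 1"
  then have "{i, j} = {j, opp_pred j}" "j \<in> {1..N}" using assms unfolding opp_pred_def by auto
  then show ?thesis unfolding near_diameters_def by blast
qed

text \<open>A longer edge strictly contains a diameter; a shorter one misses the diameter through the
  vertex following it, or preceding it if it ends at the last vertex.\<close>
lemma parallel_diameter_E:
  assumes ij: "1 \<le> i" "i < j" "j \<le> N" and len: "j + 1 < i + n \<or> i + n + 1 < j"
  obtains k where "1 \<le> k" "k \<le> n" "k \<notin> {i, j}" "k + n \<notin> {i, j}" "\<not> cross {k, k + n} {i, j}"
proof -
  consider "i + n + 1 < j" | "j + 1 < i + n" "j < n" | "j + 1 < i + n" "n \<le> j" "j < N"
    | "j + 1 < i + n" "j = N"
    using len ij by linarith
  then show thesis
  proof cases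
    case 1
    then show ?thesis using ij N_eq by (intro that[of "i + 1"]) (auto simp: cross_doubleton)
  next
    case 2
    then show ?thesis using ij by (intro that[of "j + 1"]) (auto simp: cross_doubleton)
  next
    case 3
    then show ?thesis using ij N_eq by (intro that[of "j + 1 - n"]) (auto simp: cross_doubleton)
  next
    case 4
    then show ?thesis using ij N_eq by (intro that[of "i - 1 - n"]) (auto simp: cross_doubleton)
  qed
qed

lemma edges_near_diameters:
  assumes tf: "two_factor N F"
    and parallel_free: "\<forall>d\<in>diameters. noncrossing_disjoint F d = {}"
  shows "F \<subseteq> diameters \<union> near_diameters"
proof
  fix e assume eF: "e \<in> F"
  obtain i j where ij: "i < j" "e = {i, j}"
    using card_2_ordered_E two_factor_edge[OF tf eF] by blast
  have ijN: "1 \<le> i" "j \<le> N" using two_factor_edge[OF tf eF] ij by auto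
  have "\<not> (j + 1 < i + n \<or> i + n + 1 < j)"
  proof
    assume "j + 1 < i + n \<or> i + n + 1 < j"
    then obtain k where k: "1 \<le> k" "k \<le> n" "k \<notin> {i, j}" "k + n \<notin> {i, j}"
      "\<not> cross {k, k + n} {i, j}"
      by (rule parallel_diameter_E[OF ijN(1) ij(1) ijN(2)])
    have "{k, k + n} \<in> diameters" using k N_eq by (simp add: doubleton_in_diameters)
    moreover have "e \<in> noncrossing_disjoint F {k, k + n}"
      using k eF ij unfolding noncrossing_disjoint_def by auto
    ultimately show False using parallel_free by blast
  qed
  then consider "j = i + n" | "j + 1 = i + n \<or> j = i + n + 1" by linarith
  then show "e \<in> diameters \<union> near_diameters"
  proof cases
    case 1
    then show ?thesis using ij ijN doubleton_in_diameters by simp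
  next
    case 2
    then show ?thesis using ij ijN doubleton_in_near_diameters by simp
  qed
qed

lemma near_diameter_at_vertex:
  assumes tf: "two_factor N F" and dF: "diameters \<subseteq> F"
    and near: "F \<subseteq> diameters \<union> near_diameters" and w: "w \<in> {1..N}"
  shows "{w, opp_pred w} \<in> F \<longleftrightarrow> {opp_succ w, w} \<notin> F"
proof -
  have "{w, antipode w} \<in> F" using antipode_in_diameters[OF w] dF by blast
  then obtain g where g: "g \<noteq> {w, antipode w}" "{e \<in> F. w \<in> e} = {{w, antipode w}, g}"
    by (rule two_factor_other_edge[OF tf _ insertI1])
  have distinct: "{w, antipode w} \<noteq> {w, opp_pred w}" "{w, antipode w} \<noteq> {opp_succ w, w}"
    "{w, opp_pred w} \<noteq> {opp_succ w, w}"
    using antipode_neq[OF w] opp_pred_neq[OF w] opp_succ_neq[OF w] antipode_neq_opp_pred[OF w]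
      antipode_neq_opp_succ[OF w] opp_pred_neq_opp_succ[OF w]
    by (auto simp: doubleton_eq_iff)
  have g_in: "g \<in> F" "w \<in> g" using g(2) by blast+
  have at_w: "e = {w, antipode w} \<or> e = g" if "e \<in> F" "w \<in> e" for e
    using that g(2) by blast
  have "g \<notin> diameters" using g(1) g_in(2) diameter_through by blast
  then obtain v where v: "v \<in> {1..N}" "g = {v, opp_pred v}"
    using near g_in(1) unfolding near_diameters_def by blast
  then have g_cases: "g = {w, opp_pred w} \<or> g = {opp_succ w, w}"
    using g_in(2) opp_succ_opp_pred by auto
  have "{w, opp_pred w} \<in> F \<longleftrightarrow> g = {w, opp_pred w}"
    using at_w[of "{w, opp_pred w}"] distinct(1) g_in by auto
  moreover have "{opp_succ w, w} \<in> F \<longleftrightarrow> g = {opp_succ w, w}"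
    using at_w[of "{opp_succ w, w}"] distinct(2) g_in by auto
  ultimately show ?thesis using g_cases distinct(3) by blast
qed

end

section \<open>The extremal 2-factors\<close>

lemma wrap_of_nat: "1 \<le> k \<Longrightarrow> k \<le> int N \<Longrightarrow> wrap N k = nat k"
  unfolding wrap_def by simp

lemma wrap_zero: "0 < N \<Longrightarrow> wrap N 0 = N"
  unfolding wrap_def using zmod_minus1[of "int N"] by simp

lemma cycle_edges_4: "cycle_edges [a, b, c, d] = {{a, b}, {b, c}, {c, d}, {d, a}}"
proof -
  have "{i. i < 4} = {0, 1, 2, 3 :: nat}" by auto
  have "cycle_edges [a, b, c, d]
      = (\<lambda>i. {[a, b, c, d] ! i, [a, b, c, d] ! ((i + 1) mod 4)}) ` {i. i < 4}"
    unfolding cycle_edges_def by auto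
  also have "\<dots> = {{a, b}, {b, c}, {c, d}, {d, a}}" unfolding \<open>{i. i < 4} = _\<close> by simp
  finally show ?thesis .
qed

lemma step_two_invariant_parity:
  fixes P :: "nat \<Rightarrow> bool"
  assumes step: "\<And>v. 1 \<le> v \<Longrightarrow> v + 2 \<le> N \<Longrightarrow> P (v + 2) \<longleftrightarrow> P v" and v: "v \<in> {1..N}"
  shows "P v \<longleftrightarrow> P (if odd v then 1 else 2)"
  using v
proof (induction v rule: less_induct)
  case (less v)
  show ?case
  proof (cases "3 \<le> v")
    case True
    obtain u where u: "v = u + 2" using True by (intro that[of "v - 2"]) simp
    have "P v \<longleftrightarrow> P u" using step[of u] True less.prems u by simp
    also have "\<dots> \<longleftrightarrow> P (if odd u then 1 else 2)" using less.IH[of u] u True less.prems by simp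
    finally show ?thesis using u by simp
  next
    case False
    then have "v = 1 \<or> v = 2" using less.prems by auto
    then show ?thesis by auto
  qed
qed

locale antipodal_even = antipodal +
  assumes even_n: "even n"
begin

lemma odd_opp_pred: "v \<in> {1..N} \<Longrightarrow> odd (opp_pred v) \<longleftrightarrow> even v"
  using even_n n_ge_2 unfolding opp_pred_def N_eq by (auto elim!: evenE)

lemma odd_opp_succ: "v \<in> {1..N} \<Longrightarrow> odd (opp_succ v) \<longleftrightarrow> even v"
  using even_n n_ge_2 unfolding opp_succ_def N_eq by (auto elim!: evenE)

definition extremal_factor :: "bool \<Rightarrow> nat set set" where
  "extremal_factor b = diameters \<union> {{v, opp_pred v} | v. v \<in> {1..N} \<and> odd v = b}"

lemma extremal_factor_E:
  assumes "e \<in> extremal_factor b"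
  obtains (diameter) k where "e = {k, k + n}" "1 \<le> k" "k \<le> n"
    | (near) v where "v \<in> {1..N}" "odd v = b" "e = {v, opp_pred v}"
  using assms unfolding extremal_factor_def
proof (elim UnE)
  assume "e \<in> diameters"
  then obtain k where "e = {k, k + n}" "1 \<le> k" "k \<le> n" by (rule diameter_E)
  then show thesis by (rule diameter)
qed (use near in blast)

lemma diameters_subset_extremal_factor: "diameters \<subseteq> extremal_factor b"
  unfolding extremal_factor_def by blast

lemma near_diameter_in_extremal_factor:
  "v \<in> {1..N} \<Longrightarrow> odd v = b \<Longrightarrow> {v, opp_pred v} \<in> extremal_factor b"
  unfolding extremal_factor_def by blast

text \<open>Passing from v to opp_succ v toggles whether the near-diameter {v, opp_pred v} is
  present; since opp_succ (opp_succ v) = v + 2 and n is even, its presence only depends on the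
  parity of v.\<close>
lemma near_diameter_factor_extremal:
  assumes tf: "two_factor N F" and dF: "diameters \<subseteq> F"
    and near: "F \<subseteq> diameters \<union> near_diameters"
  shows "\<exists>b. F = extremal_factor b"
proof -
  define P where "P v \<longleftrightarrow> {v, opp_pred v} \<in> F" for v
  have alternate: "P v \<longleftrightarrow> \<not> P (opp_succ v)" if "v \<in> {1..N}" for v
    using near_diameter_at_vertex[OF tf dF near that] opp_pred_opp_succ[OF that]
    unfolding P_def by (simp add: insert_commute)
  have period: "P (v + 2) \<longleftrightarrow> P v" if "1 \<le> v" "v + 2 \<le> N" for v
    using alternate[of v] alternate[of "opp_succ v"] opp_succ_range[of v] opp_succ_opp_succ that
    by auto
  have parity: "P v \<longleftrightarrow> P (if odd v then 1 else 2)" if "v \<in> {1..N}" for v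
    using step_two_invariant_parity[of N P, OF period that] .
  have "opp_succ 1 = n + 2" unfolding opp_succ_def using n_ge_2 by simp
  then have "P 1 \<longleftrightarrow> \<not> P 2"
    using alternate[of 1] parity[of "n + 2"] even_n n_ge_2 N_eq by simp
  then have P_iff: "P v \<longleftrightarrow> odd v = P 1" if "v \<in> {1..N}" for v
    using parity[OF that] by auto
  have "F = extremal_factor (P 1)"
  proof
    show "F \<subseteq> extremal_factor (P 1)"
    proof
      fix e assume "e \<in> F"
      show "e \<in> extremal_factor (P 1)"
      proof (cases "e \<in> diameters")
        case False
        then obtain v where "v \<in> {1..N}" "e = {v, opp_pred v}"
          using near \<open>e \<in> F\<close> unfolding near_diameters_def by blast
        then show ?thesis using P_iff \<open>e \<in> F\<close> unfolding extremal_factor_def P_def by blast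
      qed (simp add: extremal_factor_def)
    qed
    show "extremal_factor (P 1) \<subseteq> F"
      using dF P_iff unfolding extremal_factor_def P_def by blast
  qed
  then show ?thesis ..
qed

definition partner :: "bool \<Rightarrow> nat \<Rightarrow> nat" where
  "partner b v = (if odd v = b then opp_pred v else opp_succ v)"

lemma partner_involution:
  "v \<in> {1..N} \<Longrightarrow> partner b v \<in> {1..N} \<and> partner b (partner b v) = v \<and> partner b v \<noteq> v"
  unfolding partner_def
  using opp_pred_range opp_succ_range odd_opp_pred odd_opp_succ opp_pred_opp_succ opp_succ_opp_pred
    opp_pred_neq opp_succ_neq
  by auto

lemma extremal_factor_eq:
  "extremal_factor b = {{v, antipode v} | v. v \<in> {1..N}} \<union> {{v, partner b v} | v. v \<in> {1..N}}"
proof -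
  have "{{v, opp_pred v} | v. v \<in> {1..N} \<and> odd v = b} = {{v, partner b v} | v. v \<in> {1..N}}"
  proof
    show "{{v, partner b v} | v. v \<in> {1..N}} \<subseteq> {{v, opp_pred v} | v. v \<in> {1..N} \<and> odd v = b}"
    proof clarify
      fix v assume v: "v \<in> {1..N}"
      show "\<exists>u. {v, partner b v} = {u, opp_pred u} \<and> u \<in> {1..N} \<and> odd u = b"
      proof (cases "odd v = b")
        case False
        then show ?thesis using v opp_succ_range odd_opp_succ opp_pred_opp_succ
          unfolding partner_def by (intro exI[of _ "opp_succ v"]) auto
      qed (use v in \<open>intro exI[of _ v], simp add: partner_def\<close>)
    qed
  next
    show "{{v, opp_pred v} | v. v \<in> {1..N} \<and> odd v = b} \<subseteq> {{v, partner b v} | v. v \<in> {1..N}}"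
      unfolding partner_def by force
  qed
  then show ?thesis unfolding extremal_factor_def diameters_eq by simp
qed

lemma two_factor_extremal_factor: "two_factor N (extremal_factor b)"
  unfolding extremal_factor_eq
proof (rule two_factor_union_involutions)
  fix v assume v: "v \<in> {1..N}"
  show "antipode v \<in> {1..N} \<and> antipode (antipode v) = v \<and> antipode v \<noteq> v"
    using antipode_range antipode_antipode antipode_neq v by blast
  show "partner b v \<in> {1..N} \<and> partner b (partner b v) = v \<and> partner b v \<noteq> v"
    using partner_involution[OF v] .
  show "antipode v \<noteq> partner b v"
    using antipode_neq_opp_pred[OF v] antipode_neq_opp_succ[OF v] unfolding partner_def by simp
qed

lemma extremal_factor_near_diameters: "extremal_factor b \<subseteq> diameters \<union> near_diameters"
  unfolding extremal_factor_def near_diameters_def by blast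

lemma noncrossing_sum_extremal_factor:
  "(\<Sum>e\<in>extremal_factor b. card (noncrossing_disjoint (extremal_factor b) e)) = n"
  using noncrossing_sum_le[OF two_factor_extremal_factor _ extremal_factor_near_diameters]
    noncrossing_sum_ge[OF two_factor_extremal_factor]
  by (simp add: extremal_factor_def le_antisym)

lemma h1_eq: "h1 N = (\<Union>a\<in>{a. odd a \<and> 1 \<le> a \<and> a < n}.
    {{a, a + n}, {a + n, a + 1}, {a + 1, a + n + 1}, {a + n + 1, a}})"
proof -
  have "N div 2 = n" "int N = 2 * int n" using N_eq by simp_all
  moreover have "{a. odd a \<and> 1 \<le> a \<and> a \<le> n - 1} = {a. odd a \<and> 1 \<le> a \<and> a < n}"
    using n_ge_2 by auto
  ultimately show ?thesis
    unfolding h1_def using n_ge_2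
    by (intro SUP_cong) (auto simp: cycle_edges_4 wrap_of_nat nat_add_distrib)
qed

lemma h1_subset_extremal_factor: "h1 N \<subseteq> extremal_factor False"
proof
  fix e assume "e \<in> h1 N"
  then obtain a where a: "odd a" "1 \<le> a" "a < n"
    and e: "e \<in> {{a, a + n}, {a + n, a + 1}, {a + 1, a + n + 1}, {a + n + 1, a}}"
    unfolding h1_eq by blast
  have "{a, a + n} \<in> diameters" "{a + 1, a + 1 + n} \<in> diameters"
    using a N_eq by (simp_all add: doubleton_in_diameters)
  moreover have "{a + 1, opp_pred (a + 1)} \<in> extremal_factor False"
    "{a + n + 1, opp_pred (a + n + 1)} \<in> extremal_factor False"
    using a even_n N_eq by (intro near_diameter_in_extremal_factor; simp)+
  moreover have "opp_pred (a + 1) = a + n" "opp_pred (a + n + 1) = a"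
    unfolding opp_pred_def using a by auto
  ultimately show "e \<in> extremal_factor False"
    using e diameters_subset_extremal_factor by (auto simp: insert_commute add.commute)
qed

lemma h1_memI:
  assumes "odd a" "1 \<le> a" "a < n"
    and "e \<in> {{a, a + n}, {a + n, a + 1}, {a + 1, a + n + 1}, {a + n + 1, a}}"
  shows "e \<in> h1 N"
  unfolding h1_eq using assms by (intro UN_I[of a]) auto

lemma extremal_factor_subset_h1: "extremal_factor False \<subseteq> h1 N"
proof
  fix e assume "e \<in> extremal_factor False"
  then show "e \<in> h1 N"
  proof (cases rule: extremal_factor_E)
    case (diameter k)
    show ?thesis
    proof (cases "odd k")
      case True
      then have "k \<noteq> n" using even_n by auto
      then show ?thesis using diameter True by (intro h1_memI[of k]) auto
    next
      case False
      then have "k - 1 + 1 = k" "odd (k - 1)" using diameter by (auto elim: oddE)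
      then show ?thesis using diameter by (intro h1_memI[of "k - 1"]) auto
    qed
  next
    case (near v)
    show ?thesis
    proof (cases "v \<le> n")
      case True
      then have "2 \<le> v" "v - 1 + 1 = v" "odd (v - 1)" "opp_pred v = v - 1 + n"
        using near unfolding opp_pred_def by (auto elim: oddE)
      then show ?thesis using near True by (intro h1_memI[of "v - 1"]) auto
    next
      case False
      then have "n + 2 \<le> v" using near(2) even_n by presburger
      then have "v - n - 1 + n + 1 = v" "opp_pred v = v - n - 1" unfolding opp_pred_def by auto
      moreover have "odd (v - n - 1)" using \<open>n + 2 \<le> v\<close> near(2) even_n by presburger
      ultimately show ?thesis using near N_eq \<open>n + 2 \<le> v\<close> by (intro h1_memI[of "v - n - 1"]) auto
    qed
  qed
qed

lemma h1_extremal_factor: "h1 N = extremal_factor False"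
  using h1_subset_extremal_factor extremal_factor_subset_h1 by (rule equalityI)

lemma h2_eq: "h2 N = (\<Union>a\<in>{a. odd a \<and> 1 \<le> a \<and> a < n}.
    {{a, a + n}, {a + n, opp_pred (a + n)}, {opp_pred (a + n), a + n - 1}, {a + n - 1, a}})"
proof -
  have "N div 2 = n" "int N = 2 * int n" using N_eq by simp_all
  moreover have "{a. odd a \<and> 1 \<le> a \<and> a \<le> n - 1} = {a. odd a \<and> 1 \<le> a \<and> a < n}"
    using n_ge_2 by auto
  moreover have "wrap N (int a - 1) = opp_pred (a + n)" if "1 \<le> a" "a < n" for a
  proof (cases "a = 1")
    case True
    then show ?thesis using wrap_zero[of N] n_ge_2 N_eq unfolding opp_pred_def by simp
  next
    case False
    then show ?thesis using that N_eq unfolding opp_pred_def by (subst wrap_of_nat) auto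
  qed
  ultimately show ?thesis
    unfolding h2_def using n_ge_2
    by (intro SUP_cong) (auto simp: cycle_edges_4 wrap_of_nat nat_add_distrib nat_diff_distrib)
qed

lemma h2_subset_extremal_factor: "h2 N \<subseteq> extremal_factor True"
proof
  fix e assume "e \<in> h2 N"
  then obtain a where a: "odd a" "1 \<le> a" "a < n" and e: "e \<in> {{a, a + n},
      {a + n, opp_pred (a + n)}, {opp_pred (a + n), a + n - 1}, {a + n - 1, a}}"
    unfolding h2_eq by blast
  have "{a, a + n} \<in> diameters" using a N_eq by (simp add: doubleton_in_diameters)
  moreover have "{opp_pred (a + n), a + n - 1} \<in> diameters"
  proof (cases "a = 1")
    case True
    then have "{opp_pred (a + n), a + n - 1} = {n, n + n}"
      unfolding opp_pred_def N_eq by auto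
    then show ?thesis using n_ge_2 N_eq by (simp add: doubleton_in_diameters)
  next
    case False
    then have "{opp_pred (a + n), a + n - 1} = {a - 1, a - 1 + n}"
      unfolding opp_pred_def using a by auto
    then show ?thesis using a False N_eq by (auto simp: doubleton_in_diameters)
  qed
  moreover have "{a + n, opp_pred (a + n)} \<in> extremal_factor True"
    "{a, opp_pred a} \<in> extremal_factor True"
    using a even_n N_eq by (intro near_diameter_in_extremal_factor; simp)+
  moreover have "opp_pred a = a + n - 1" unfolding opp_pred_def using a by auto
  ultimately show "e \<in> extremal_factor True"
    using e diameters_subset_extremal_factor by (auto simp: insert_commute)
qed

lemma h2_memI:
  assumes "odd a" "1 \<le> a" "a < n"
    and "e \<in> {{a, a + n}, {a + n, opp_pred (a + n)}, {opp_pred (a + n), a + n - 1}, {a + n - 1, a}}"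
  shows "e \<in> h2 N"
  unfolding h2_eq using assms by (intro UN_I[of a]) auto

lemma extremal_factor_subset_h2: "extremal_factor True \<subseteq> h2 N"
proof
  fix e assume "e \<in> extremal_factor True"
  then show "e \<in> h2 N"
  proof (cases rule: extremal_factor_E)
    case (diameter k)
    consider "odd k" | "even k" "k < n" | "k = n" using diameter by linarith
    then show ?thesis
    proof cases
      case 1
      then have "k \<noteq> n" using even_n by auto
      then show ?thesis using diameter 1 by (intro h2_memI[of k]) auto
    next
      case 2
      then have "k + 1 < n" using even_n by presburger
      moreover have "odd (k + 1)" "opp_pred (k + 1 + n) = k"
        using 2 diameter unfolding opp_pred_def by auto
      ultimately show ?thesis using diameter by (intro h2_memI[of "k + 1"]) auto
    next
      case 3
      then have "opp_pred (1 + n) = n + n" unfolding opp_pred_def by simp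
      then show ?thesis using diameter 3 n_ge_2 by (intro h2_memI[of 1]) auto
    qed
  next
    case (near v)
    show ?thesis
    proof (cases "v < n")
      case True
      then have "opp_pred v = v + n - 1" unfolding opp_pred_def by simp
      then show ?thesis using near True by (intro h2_memI[of v]) auto
    next
      case False
      moreover have "v \<le> N" using near(1) by simp
      ultimately have "n + 1 \<le> v" "v < N" using near(2) even_n N_eq by presburger+
      then have "odd (v - n)" "1 \<le> v - n" "v - n < n" "v - n + n = v"
        using near(2) even_n N_eq by auto
      then show ?thesis using near by (intro h2_memI[of "v - n"]) auto
    qed
  qed
qed

lemma h2_extremal_factor: "h2 N = extremal_factor True"
  using h2_subset_extremal_factor extremal_factor_subset_h2 by (rule equalityI)

lemma noncrossing_sum_eq_iff:
  assumes tf: "two_factor N F"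
  shows "(\<Sum>e\<in>F. card (noncrossing_disjoint F e)) = n \<longleftrightarrow> F \<in> {h1 N, h2 N}"
proof
  assume "(\<Sum>e\<in>F. card (noncrossing_disjoint F e)) = n"
  then have "diameters \<subseteq> F" "\<forall>d\<in>diameters. noncrossing_disjoint F d = {}"
    using noncrossing_sum_eq_imp_diameters[OF tf] by blast+
  then obtain b where "F = extremal_factor b"
    using near_diameter_factor_extremal[OF tf] edges_near_diameters[OF tf] by blast
  then show "F \<in> {h1 N, h2 N}" using h1_extremal_factor h2_extremal_factor by (cases b) auto
next
  assume "F \<in> {h1 N, h2 N}"
  then show "(\<Sum>e\<in>F. card (noncrossing_disjoint F e)) = n"
    using h1_extremal_factor h2_extremal_factor noncrossing_sum_extremal_factor by auto
qed

lemma two_factor_h1_h2: "F \<in> {h1 N, h2 N} \<Longrightarrow> two_factor N F"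
  using h1_extremal_factor h2_extremal_factor two_factor_extremal_factor by auto

lemma maximal_crossings_iff:
  assumes tf: "two_factor N F"
  shows "(\<forall>G. two_factor N G \<longrightarrow> crossings G \<le> crossings F) \<longleftrightarrow> F \<in> {h1 N, h2 N}"
proof -
  define S where "S G = (\<Sum>e\<in>G. card (noncrossing_disjoint G e))" for G
  have le_iff: "crossings G \<le> crossings F \<longleftrightarrow> S F \<le> S G" if "two_factor N G" for G
    using crossings_identity[OF that] crossings_identity[OF tf] unfolding S_def by linarith
  have lower: "n \<le> S G" if "two_factor N G" for G
    using noncrossing_sum_ge[OF that] unfolding S_def .
  have h1: "two_factor N (h1 N)" "S (h1 N) = n"
    using two_factor_h1_h2 noncrossing_sum_eq_iff unfolding S_def by auto
  have "(\<forall>G. two_factor N G \<longrightarrow> crossings G \<le> crossings F) \<longleftrightarrow> S F \<le> n"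
    using le_iff lower h1 by (metis order_trans)
  also have "\<dots> \<longleftrightarrow> F \<in> {h1 N, h2 N}"
    using noncrossing_sum_ge[OF tf] noncrossing_sum_eq_iff[OF tf] unfolding S_def by linarith
  finally show ?thesis .
qed

end

theorem propositionB1:
  fixes N :: nat and r :: "nat \<Rightarrow> real"
  assumes "N \<ge> 4" and "4 dvd N"
    and "\<forall>i\<in>{1..N}. 0 \<le> r i \<and> r i \<le> 1"
    and "\<forall>i\<in>{1..N}. \<forall>j\<in>{1..N}. i < j \<longrightarrow> r i < r j"
  shows "{F. two_factor N F \<and> (\<forall>G. two_factor N G \<longrightarrow> crossings G \<le> crossings F)}
           = {h1 N, h2 N}"
proof -
  obtain m where "N = 4 * m" using assms(2) by blast
  then interpret antipodal_even N "2 * m" using assms(1) by unfold_locales auto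
  show ?thesis using maximal_crossings_iff two_factor_h1_h2 by blast
qed

end
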